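(* Let $e_1,\dots,e_n$ be an orthonormal basis of $\mathbb{R}^n$ and, for $0<\alpha<1$, let $$T_{\alpha}=\{x\in\mathbb{R}^n: |x\cdot e_1|\leq\alpha\ \text{and}\ |x\cdot e_2|^2+\cdots+|x\cdot e_n|^2\leq1\}.$$ If $j\neq n$, $0<q<n-j$, and $Q\in\mathcal{S}_o^n$ is fixed, then $$\lim_{\alpha\rightarrow0^+}\int_{S^{n-1}}\rho_{T_\alpha}^q(u)\rho_Q^{n-q-j}(u)\,du=0.$$
   Context: $\mathcal{S}_o^n$ denotes the set of compact sets in $\mathbb{R}^n$ star-shaped about the origin whose radial function $\rho_Q(x)=\max\{\lambda\ge0:\lambda x\in Q\}$ is positive and continuous on $\mathbb{R}^n\setminus\{0\}$; $\rho_{T_\alpha}$ is the radial function of $T_\alpha$ defined the same way; $du$ is spherical Lebesgue measure on $S^{n-1}$. *)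

theory Defs
  imports "HOL-Analysis.Analysis"
begin

definition radial :: "'a::real_normed_vector set \<Rightarrow> 'a \<Rightarrow> real" where
  "radial K x = Sup {t. t \<ge> 0 \<and> t *\<^sub>R x \<in> K}"

definition star_bodies_o :: "'a::euclidean_space set set" where
  "star_bodies_o = {Q. compact Q \<and> 0 \<in> Q \<and> (\<forall>x\<in>Q. closed_segment 0 x \<subseteq> Q)
      \<and> (\<forall>x. x \<noteq> 0 \<longrightarrow> radial Q x > 0)
      \<and> continuous_on (UNIV - {0}) (radial Q)}"

text \<open>Spherical Lebesgue measure on the unit sphere, defined as the cone measure:
  sigma(A) = n * lambda_n({t u. 0 < t \<le> 1, u \<in> A}), i.e. the push-forward of
  n times Lebesgue measure on the punctured unit ball under x \<mapsto> x/|x|.\<close>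
definition sphere_measure :: "'a::euclidean_space measure" where
  "sphere_measure =
     distr (density (restrict_space lborel (ball 0 1 - {0})) (\<lambda>_. ennreal (real DIM('a))))
           (restrict_space borel (sphere 0 1)) (\<lambda>x. x /\<^sub>R norm x)"

definition T_cyl :: "(nat \<Rightarrow> 'a::euclidean_space) \<Rightarrow> real \<Rightarrow> 'a set" where
  "T_cyl e a = {x. \<bar>x \<bullet> e 1\<bar> \<le> a \<and> (\<Sum>i=2..DIM('a). \<bar>x \<bullet> e i\<bar>^2) \<le> 1}"

end

theory Submission
  imports Defs
begin

text \<open>On the unit sphere, \<open>\<rho>\<^sub>T\<^sub>\<alpha>(u) \<le> min (\<surd>2) (\<alpha> / \<bar>u \<bullet> e\<^sub>1\<bar>)\<close>, and \<open>\<rho>\<^sub>Q\<close> is bounded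
  by compactness, so the integrand is dominated by a constant multiple of
  \<open>min (\<surd>2) (\<alpha> / \<bar>u \<bullet> e\<^sub>1\<bar>) ^ q\<close>. This majorant is uniformly bounded and tends to 0 for
  every \<open>u\<close> off the null set \<open>u \<bullet> e\<^sub>1 = 0\<close>, so bounded convergence on the finite measure
  \<open>\<sigma>\<close> gives the claim.\<close>

lemma sum_inner_square_orthonormal:
  fixes e :: "'i \<Rightarrow> 'a::euclidean_space"
  assumes "finite I" and "card I = DIM('a)"
    and orth: "\<forall>i\<in>I. \<forall>k\<in>I. e i \<bullet> e k = (if i = k then 1 else 0)"
  shows "(\<Sum>i\<in>I. (x \<bullet> e i)\<^sup>2) = (norm x)\<^sup>2"
proof -
  define B where "B = e ` I"
  have inj: "inj_on e I"
    using orth by (intro inj_onI) (metis one_neq_zero)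
  have orthogonal_B: "pairwise orthogonal B"
    using orth unfolding B_def pairwise_def orthogonal_def by auto
  have unit_B: "\<And>b. b \<in> B \<Longrightarrow> norm b = 1"
    using orth unfolding B_def by (auto simp: norm_eq_1)
  have "independent B"
    using unit_B by (intro pairwise_orthogonal_independent[OF orthogonal_B]) force
  moreover have "card B = DIM('a)"
    using inj assms(2) by (simp add: B_def card_image)
  ultimately have "span B = UNIV"
    using card_ge_dim_independent[of B UNIV] by auto
  then have "x = (\<Sum>b\<in>B. (x \<bullet> b) *\<^sub>R b)"
    using orthonormal_basis_expand[OF orthogonal_B unit_B] assms(1) by (simp add: B_def)
  then have "x \<bullet> x = (\<Sum>b\<in>B. (x \<bullet> b)\<^sup>2)"
    by (metis (no_types, lifting) inner_scaleR_right inner_sum_right power2_eq_square sum.cong)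
  also have "\<dots> = (\<Sum>i\<in>I. (x \<bullet> e i)\<^sup>2)"
    using inj by (simp add: B_def sum.reindex)
  finally show ?thesis
    by (simp add: power2_norm_eq_inner)
qed

lemma radial_le_bound:
  assumes "0 \<in> K" and bound: "\<And>t. 0 \<le> t \<Longrightarrow> t *\<^sub>R x \<in> K \<Longrightarrow> t \<le> b"
  shows "0 \<le> radial K x" and "radial K x \<le> b"
proof -
  define S where "S = {t. t \<ge> 0 \<and> t *\<^sub>R x \<in> K}"
  have "0 \<in> S" "bdd_above S"
    using assms unfolding S_def bdd_above_def by auto
  moreover have "s \<le> b" if "s \<in> S" for s
    using that bound by (auto simp: S_def)
  ultimately show "0 \<le> radial K x" "radial K x \<le> b"
    unfolding radial_def S_def[symmetric] by (auto intro: cSup_upper cSup_least)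
qed

lemma T_cyl_subset_cball:
  fixes e :: "nat \<Rightarrow> 'a::euclidean_space"
  assumes orth: "\<forall>i\<in>{1..DIM('a)}. \<forall>k\<in>{1..DIM('a)}. e i \<bullet> e k = (if i = k then 1 else 0)"
    and "a \<le> 1"
  shows "T_cyl e a \<subseteq> cball 0 (sqrt 2)"
proof
  fix x assume x: "x \<in> T_cyl e a"
  have "(norm x)\<^sup>2 = (\<Sum>i=1..DIM('a). (x \<bullet> e i)\<^sup>2)"
    using sum_inner_square_orthonormal[OF _ _ orth] by simp
  also have "\<dots> = (x \<bullet> e 1)\<^sup>2 + (\<Sum>i=2..DIM('a). \<bar>x \<bullet> e i\<bar>\<^sup>2)"
    using sum.atLeast_Suc_atMost[of 1 "DIM('a)"] by (simp add: DIM_positive Suc_leI numeral_2_eq_2)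
  also have "\<dots> \<le> 1 + 1"
  proof (rule add_mono)
    have "\<bar>x \<bullet> e 1\<bar> \<le> 1"
      using x \<open>a \<le> 1\<close> by (simp add: T_cyl_def)
    then show "(x \<bullet> e 1)\<^sup>2 \<le> 1"
      by (simp add: abs_square_le_1)
  qed (use x in \<open>simp add: T_cyl_def\<close>)
  finally show "x \<in> cball 0 (sqrt 2)"
    by (simp add: real_le_rsqrt)
qed

lemma radial_T_cyl_le:
  fixes e :: "nat \<Rightarrow> 'a::euclidean_space"
  assumes orth: "\<forall>i\<in>{1..DIM('a)}. \<forall>k\<in>{1..DIM('a)}. e i \<bullet> e k = (if i = k then 1 else 0)"
    and "norm u = 1" and "0 \<le> a" and "a \<le> 1" and "u \<bullet> e 1 \<noteq> 0"
  shows "0 \<le> radial (T_cyl e a) u" and "radial (T_cyl e a) u \<le> min (sqrt 2) (a / \<bar>u \<bullet> e 1\<bar>)"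
proof -
  have "0 \<in> T_cyl e a"
    using \<open>0 \<le> a\<close> by (simp add: T_cyl_def)
  moreover have "t \<le> min (sqrt 2) (a / \<bar>u \<bullet> e 1\<bar>)" if "0 \<le> t" "t *\<^sub>R u \<in> T_cyl e a" for t
  proof -
    have "t \<le> sqrt 2"
      using T_cyl_subset_cball[OF orth \<open>a \<le> 1\<close>] that \<open>norm u = 1\<close> by auto
    moreover have "t * \<bar>u \<bullet> e 1\<bar> \<le> a"
      using that by (simp add: T_cyl_def abs_mult)
    ultimately show ?thesis
      using \<open>u \<bullet> e 1 \<noteq> 0\<close> by (simp add: pos_le_divide_eq)
  qed
  ultimately show "0 \<le> radial (T_cyl e a) u" "radial (T_cyl e a) u \<le> min (sqrt 2) (a / \<bar>u \<bullet> e 1\<bar>)"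
    using radial_le_bound by blast+
qed

lemma space_sphere_measure [simp]: "space (sphere_measure :: 'a::euclidean_space measure) = sphere 0 1"
  by (simp add: sphere_measure_def space_restrict_space)

lemma borel_measurable_sphere_measure:
  "f \<in> borel_measurable borel \<Longrightarrow> f \<in> borel_measurable (sphere_measure :: 'a::euclidean_space measure)"
  unfolding sphere_measure_def measurable_distr_eq1 by (rule measurable_restrict_space1)

lemma measurable_normalize_punctured_ball:
  "(\<lambda>x::'a::euclidean_space. x /\<^sub>R norm x)
     \<in> measurable (density (restrict_space lborel (ball 0 1 - {0})) (\<lambda>_. c)) (restrict_space borel (sphere 0 1))"
  unfolding measurable_cong_sets[OF sets_density refl]
  by (rule measurable_restrict_space3) (auto simp: measurable_lborel1)

lemma finite_measure_sphere_measure: "finite_measure (sphere_measure :: 'a::euclidean_space measure)"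
proof -
  let ?M = "density (restrict_space lborel (ball (0::'a) 1 - {0})) (\<lambda>_. ennreal (real DIM('a)))"
  have "emeasure ?M (space ?M) = ennreal DIM('a) * emeasure lborel (ball (0::'a) 1 - {0})"
    by (subst emeasure_density_const)
       (auto simp: space_restrict_space sets_restrict_space emeasure_restrict_space)
  also have "\<dots> < \<infinity>"
    using emeasure_bounded_finite[of "ball (0::'a) 1 - {0}"]
      bounded_subset[OF bounded_ball, of "ball (0::'a) 1 - {0}" 0 1]
    by (simp add: ennreal_mult_less_top)
  finally have "finite_measure ?M"
    by (intro finite_measureI) simp
  then show ?thesis
    unfolding sphere_measure_def
    by (rule finite_measure.finite_measure_distr[OF _ measurable_normalize_punctured_ball])
qed

lemma AE_sphere_measure_inner_nonzero:
  fixes v :: "'a::euclidean_space"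
  assumes "v \<noteq> 0"
  shows "AE u in sphere_measure. u \<bullet> v \<noteq> 0"
proof -
  have "{x::'a. v \<bullet> x = 0} \<in> null_sets lborel"
    using negligible_hyperplane[of v 0] assms borel_closed[OF closed_hyperplane[of v 0]]
    by (simp add: negligible_iff_null_sets null_sets_completion_iff)
  then have "AE x in lborel. x \<in> ball 0 1 - {0} \<longrightarrow> (x /\<^sub>R norm x) \<bullet> v \<noteq> 0"
    by (rule AE_not_in[THEN AE_mp]) (auto simp: inner_commute intro!: AE_I2)
  then have "AE x in restrict_space lborel (ball 0 1 - {0}). (x /\<^sub>R norm x) \<bullet> v \<noteq> 0"
    by (subst AE_restrict_space_iff) auto
  then show ?thesis
    unfolding sphere_measure_def
    by (subst AE_distr_iff[OF measurable_normalize_punctured_ball])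
       (auto simp: AE_density space_restrict_space sets_restrict_space)
qed

lemma integral_le_integrable_majorant:
  fixes f g :: "'a \<Rightarrow> real"
  assumes "integrable M g" and "AE x in M. 0 \<le> f x \<and> f x \<le> g x"
  shows "integral\<^sup>L M f \<le> integral\<^sup>L M g"
proof (cases "integrable M f")
  case True
  then show ?thesis
    using assms by (intro integral_mono_AE) auto
next
  case False
  have "0 \<le> integral\<^sup>L M g"
    using assms(2) by (intro integral_nonneg_AE) auto
  then show ?thesis
    using False by (simp add: not_integrable_integral_eq)
qed

lemma tendsto_integral_at_right_0_squeeze:
  fixes f g :: "real \<Rightarrow> 'a \<Rightarrow> real"
  assumes "finite_measure M" and g_measurable: "\<And>a. g a \<in> borel_measurable M"
    and bounds: "\<forall>\<^sub>F a in at_right 0. AE x in M. 0 \<le> f a x \<and> f a x \<le> g a x \<and> g a x \<le> W"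
    and g_lim: "AE x in M. ((\<lambda>a. g a x) \<longlongrightarrow> 0) (at_right 0)"
  shows "((\<lambda>a. LINT x|M. f a x) \<longlongrightarrow> 0) (at_right 0)"
proof -
  interpret finite_measure M by fact
  have "((\<lambda>t. LINT x|M. g (inverse t) x) \<longlongrightarrow> (LINT x|M. 0)) at_top"
  proof (rule integral_dominated_convergence_at_top[where w = "\<lambda>_. W"])
    show "AE x in M. ((\<lambda>t. g (inverse t) x) \<longlongrightarrow> 0) at_top"
      using g_lim by eventually_elim (simp add: filterlim_at_right_to_top)
    show "\<forall>\<^sub>F t in at_top. AE x in M. norm (g (inverse t) x) \<le> W"
      using bounds unfolding eventually_at_right_to_top
      by eventually_elim (erule AE_mp, auto intro!: AE_I2)
  qed (auto intro: g_measurable)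
  then have integral_g_lim: "((\<lambda>a. LINT x|M. g a x) \<longlongrightarrow> 0) (at_right 0)"
    by (simp add: filterlim_at_right_to_top)
  have "\<forall>\<^sub>F a in at_right 0. 0 \<le> (LINT x|M. f a x) \<and> (LINT x|M. f a x) \<le> (LINT x|M. g a x)"
    using bounds
  proof eventually_elim
    case (elim a)
    from elim have "AE x in M. norm (g a x) \<le> norm W"
      by eventually_elim auto
    then have "integrable M (g a)"
      by (rule Bochner_Integration.integrable_bound[OF integrable_const g_measurable])
    then show ?case
      using elim by (auto intro: integral_nonneg_AE integral_le_integrable_majorant)
  qed
  then show ?thesis
    by (intro tendsto_sandwich[OF _ _ tendsto_const integral_g_lim]) (auto elim: eventually_mono)
qed

lemma radial_bounded_on_sphere:
  fixes Q :: "'a::euclidean_space set"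
  assumes "Q \<in> star_bodies_o"
  obtains R where "\<And>u. u \<in> sphere 0 1 \<Longrightarrow> 0 < radial Q u \<and> radial Q u \<le> R"
proof -
  have pos: "\<And>x. x \<noteq> 0 \<Longrightarrow> 0 < radial Q x" and cont: "continuous_on (UNIV - {0}) (radial Q)"
    using assms by (auto simp: star_bodies_o_def)
  have "continuous_on (sphere 0 1) (radial Q)"
    by (rule continuous_on_subset[OF cont]) auto
  then obtain u0 where u0: "u0 \<in> sphere (0::'a) 1" "\<forall>u\<in>sphere 0 1. radial Q u \<le> radial Q u0"
    using continuous_attains_sup[of "sphere (0::'a) 1" "radial Q"] by auto
  show ?thesis
    by (rule that[of "radial Q u0"]) (use u0 in \<open>auto intro!: pos\<close>)
qed

lemma tendsto_min_divide_powr_at_right_0: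
  fixes b c q :: real
  assumes "0 \<le> b" and "0 < c" and "0 < q"
  shows "((\<lambda>a. min b (a / c) powr q) \<longlongrightarrow> 0) (at_right 0)"
proof (rule tendsto_zero_powrI[OF _ tendsto_const])
  have "((\<lambda>a. min b (a / c)) \<longlongrightarrow> min b (0 / c)) (at_right 0)"
    using \<open>0 < c\<close> by (intro tendsto_intros) auto
  then show "((\<lambda>a. min b (a / c)) \<longlongrightarrow> 0) (at_right 0)"
    using \<open>0 \<le> b\<close> by simp
  show "\<forall>\<^sub>F a in at_right 0. 0 \<le> min b (a / c)"
    using eventually_at_right_less[of 0] \<open>0 \<le> b\<close> \<open>0 < c\<close> by (auto elim!: eventually_mono)
qed (fact \<open>0 < q\<close>)

theorem lemma6p3:
  fixes e :: "nat \<Rightarrow> 'a::euclidean_space" and q j :: real and Q :: "'a set"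
  assumes orth: "\<forall>i\<in>{1..DIM('a)}. \<forall>k\<in>{1..DIM('a)}. e i \<bullet> e k = (if i = k then 1 else 0)"
    and "j \<noteq> real DIM('a)"
    and "0 < q" and "q < real DIM('a) - j"
    and "Q \<in> star_bodies_o"
  shows "((\<lambda>a. LINT u|sphere_measure.
              radial (T_cyl e a) u powr q * radial Q u powr (real DIM('a) - q - j))
          \<longlongrightarrow> 0) (at_right 0)"
proof -
  let ?p = "real DIM('a) - q - j"
  obtain R where R: "\<And>u. u \<in> sphere 0 1 \<Longrightarrow> 0 < radial Q u \<and> radial Q u \<le> R"
    using radial_bounded_on_sphere[OF \<open>Q \<in> star_bodies_o\<close>] by blast
  have "e 1 \<noteq> 0"
    using orth[rule_format, of 1 1] by (auto simp: DIM_positive Suc_leI)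
  \<comment> \<open>Since \<open>a / 0 = 0\<close>, \<open>g\<close> is no majorant on the hyperplane \<open>u \<bullet> e 1 = 0\<close>; this set is null.\<close>
  define g where "g a u = min (sqrt 2) (a / \<bar>u \<bullet> e 1\<bar>) powr q * R powr ?p" for a u
  have bounds: "\<forall>\<^sub>F a in at_right 0. AE u in sphere_measure.
          0 \<le> radial (T_cyl e a) u powr q * radial Q u powr ?p \<and>
          radial (T_cyl e a) u powr q * radial Q u powr ?p \<le> g a u \<and> g a u \<le> sqrt 2 powr q * R powr ?p"
    using eventually_at_right_real[OF zero_less_one]
  proof eventually_elim
    case (elim a)
    show ?case
      using AE_sphere_measure_inner_nonzero[OF \<open>e 1 \<noteq> 0\<close>] AE_space
    proof eventually_elim
      case (elim u)
      then show ?case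
        using radial_T_cyl_le[OF orth, of u a] R[of u] \<open>a \<in> {0<..<1}\<close> \<open>0 < q\<close> \<open>q < real DIM('a) - j\<close>
        unfolding g_def by (auto intro!: mult_mono powr_mono2)
    qed
  qed
  have g_lim: "AE u in sphere_measure. ((\<lambda>a. g a u) \<longlongrightarrow> 0) (at_right 0)"
    using AE_sphere_measure_inner_nonzero[OF \<open>e 1 \<noteq> 0\<close>]
    by eventually_elim
       (unfold g_def, use \<open>0 < q\<close> in \<open>auto intro!: tendsto_mult_left_zero tendsto_min_divide_powr_at_right_0\<close>)
  have g_measurable: "g a \<in> borel_measurable sphere_measure" for a
    unfolding g_def by (intro borel_measurable_sphere_measure) measurable
  show ?thesis
    by (rule tendsto_integral_at_right_0_squeeze[OF finite_measure_sphere_measure g_measurable bounds g_lim])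
qed

end
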